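(* Let $R$ be a ring with multiplicative identity, let $D\subset \mathcal{M}(R)^N$ be a free set, and let $f:D\to\mathcal{M}(R)^{\hat N}$ be a free map. Then the following are equivalent: (1) For every $n$, every $X\in D\cap\mathcal{M}_n(R)^N$ and every $H\in\mathcal{M}_n(R)^N$ with $\begin{pmatrix}X&H\\0&X\end{pmatrix}\in D$, the equality $Df(X)[H]=0$ implies $H=0$ (i.e. $Df(X)$ is nonsingular at every $X\in D$). (2) $f$ is injective on $D$. (3) $f$ is injective, and its inverse $f^{-1}:f(D)\to D$ is a free map (in particular $f(D)$ is a free set).
   Context: $\mathcal{M}_n(R)$ denotes the $n\times n$ matrices over $R$ and $\mathcal{M}(R)^N=\bigcup_{n\ge1}\mathcal{M}_n(R)^N$ is the set of $N$-tuples of square matrices of a common size. For tuples, $(A_1,\dots,A_N)\oplus(B_1,\dots,B_N)=(A_1\oplus B_1,\dots,A_N\oplus B_N)$ and $S^{-1}(A_1,\dots,A_N)S=(S^{-1}A_1S,\dots,S^{-1}A_NS)$; block matrices of tuples such as $\begin{pmatrix}X&H\\0&X\end{pmatrix}$ are formed coordinatewise. A free set $D\subset\mathcal{M}(R)^N$ is one with: $A,B\in D\Rightarrow A\oplus B\in D$, and $A\in D\cap\mathcal{M}_n(R)^N$, $S\in GL_n(R)$ $\Rightarrow S^{-1}AS\in D$. A free map $f:D\to\mathcal{M}(R)^{\hat N}$ on a free set $D$ sends $D\cap \mathcal{M}_n(R)^N$ into $\mathcal{M}_n(R)^{\hat N}$ and satisfies $f(A\oplus B)=f(A)\oplus f(B)$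 and $f(S^{-1}AS)=S^{-1}f(A)S$. Derivative: for $X\in D\cap\mathcal{M}_n(R)^N$ and $H\in\mathcal{M}_n(R)^N$ with $\begin{pmatrix}X&H\\0&X\end{pmatrix}\in D$, one has (standing convention of the paper, used as the definition of the derivative) $f\begin{pmatrix}X&H\\0&X\end{pmatrix}=\begin{pmatrix}f(X)&Df(X)[H]\\0&f(X)\end{pmatrix}$, i.e. $Df(X)[H]$ is the upper-right $n\times n$ block of $f\begin{pmatrix}X&H\\0&X\end{pmatrix}$. *)

theory Defs
  imports "Jordan_Normal_Form.Matrix"
begin

text \<open>An N-tuple of n x n matrices over R is represented as a pair (n, As), where
  As is a list of length N of n x n matrices. The size n is recorded explicitly,
  so that M(R)^N is the disjoint union over n of M_n(R)^N.\<close>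

type_synonym 'a tup = "nat \<times> 'a mat list"

definition tuples :: "nat \<Rightarrow> 'a tup set" where
  "tuples N = {(n, As). length As = N \<and> (\<forall>A \<in> set As. A \<in> carrier_mat n n)}"

definition tsum :: "'a::zero tup \<Rightarrow> 'a tup \<Rightarrow> 'a tup" where
  "tsum X Y = (case X of (n, As) \<Rightarrow> case Y of (m, Bs) \<Rightarrow>
     (n + m, map2 (\<lambda>A B. four_block_mat A (0\<^sub>m n m) (0\<^sub>m m n) B) As Bs))"

text \<open>Coordinatewise similarity: tconj T S X = S^{-1} X S where T is the inverse of S.\<close>
definition tconj :: "'a::semiring_1 mat \<Rightarrow> 'a mat \<Rightarrow> 'a tup \<Rightarrow> 'a tup" where
  "tconj T S X = (fst X, map (\<lambda>A. T * A * S) (snd X))"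

definition tblock :: "'a::zero tup \<Rightarrow> 'a tup \<Rightarrow> 'a tup" where
  "tblock X H = (case X of (n, Xs) \<Rightarrow>
     (2 * n, map2 (\<lambda>A B. four_block_mat A B (0\<^sub>m n n) A) Xs (snd H)))"

definition tzero :: "nat \<Rightarrow> nat \<Rightarrow> 'a::zero tup" where
  "tzero N n = (n, replicate N (0\<^sub>m n n))"

definition free_set :: "nat \<Rightarrow> 'a::semiring_1 tup set \<Rightarrow> bool" where
  "free_set N D \<longleftrightarrow> D \<subseteq> tuples N
     \<and> (\<forall>A \<in> D. \<forall>B \<in> D. tsum A B \<in> D)
     \<and> (\<forall>A \<in> D. \<forall>S T. S \<in> carrier_mat (fst A) (fst A) \<and> T \<in> carrier_mat (fst A) (fst A)
          \<and> S * T = 1\<^sub>m (fst A) \<and> T * S = 1\<^sub>m (fst A) \<longrightarrow> tconj T S A \<in> D)"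

definition free_map :: "nat \<Rightarrow> nat \<Rightarrow> 'a::semiring_1 tup set \<Rightarrow> ('a tup \<Rightarrow> 'a tup) \<Rightarrow> bool" where
  "free_map N Nh D f \<longleftrightarrow> free_set N D
     \<and> (\<forall>A \<in> D. f A \<in> tuples Nh \<and> fst (f A) = fst A)
     \<and> (\<forall>A \<in> D. \<forall>B \<in> D. f (tsum A B) = tsum (f A) (f B))
     \<and> (\<forall>A \<in> D. \<forall>S T. S \<in> carrier_mat (fst A) (fst A) \<and> T \<in> carrier_mat (fst A) (fst A)
          \<and> S * T = 1\<^sub>m (fst A) \<and> T * S = 1\<^sub>m (fst A) \<longrightarrow> f (tconj T S A) = tconj T S (f A))"

definition Dfree :: "('a::zero tup \<Rightarrow> 'a tup) \<Rightarrow> 'a tup \<Rightarrow> 'a tup \<Rightarrow> 'a tup" where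
  "Dfree f X H = (let n = fst X in
     (n, map (\<lambda>B. mat n n (\<lambda>(i, j). B $$ (i, j + n))) (snd (f (tblock X H)))))"

end

theory Submission
  imports Defs
begin

text \<open>Conjugating \<open>X \<oplus> Y\<close> by the shear \<open>[[1, G], [0, 1]]\<close> produces \<open>[[X, XG - GY], [0, Y]]\<close>,
  so a free map sends this tuple to \<open>[[f X, f(X)G - Gf(Y)], [0, f Y]]\<close>. Taking \<open>Y = X\<close> gives
  \<open>Df(X)[XG - GX] = f(X)G - Gf(X)\<close>; and if \<open>XG = GY\<close> the tuple is just \<open>X \<oplus> Y\<close>, so
  \<open>f(X)G = Gf(Y)\<close> as well.

  If \<open>Df\<close> is nonsingular and \<open>f X = f Y\<close>, apply the first identity to \<open>X \<oplus> Y\<close> and the nilpotent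
  \<open>G = [[0, 1], [0, 0]]\<close>: the commutator of \<open>f X \<oplus> f X\<close> with \<open>G\<close> vanishes, hence so does the
  commutator \<open>[[0, X - Y], [0, 0]]\<close> of \<open>X \<oplus> Y\<close>. Conversely, \<open>[[X, H], [0, X]]\<close> is intertwined
  with \<open>X \<oplus> X\<close> by the projections \<open>diag(1, 0)\<close> and \<open>diag(0, 1)\<close>; so is its image with
  \<open>f X \<oplus> f X\<close>, which forces \<open>f [[X, H], [0, X]] = [[f X, Df(X)[H]], [0, f X]]\<close>. Thus
  \<open>Df(X)[H] = 0\<close> means \<open>f [[X, H], [0, X]] = f (X \<oplus> X)\<close>, and injectivity gives \<open>H = 0\<close>.\<close>

lemma split_block_four_block_mat:
  assumes "A \<in> carrier_mat nr1 nc1" "B \<in> carrier_mat nr1 nc2"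
    "C \<in> carrier_mat nr2 nc1" "D \<in> carrier_mat nr2 nc2"
  shows "split_block (four_block_mat A B C D) nr1 nc1 = (A, B, C, D)"
  using assms unfolding split_block_def Let_def by (auto intro!: eq_matI)

lemma four_block_mat_inject:
  assumes "A \<in> carrier_mat nr1 nc1" "B \<in> carrier_mat nr1 nc2"
    "C \<in> carrier_mat nr2 nc1" "D \<in> carrier_mat nr2 nc2"
    "A' \<in> carrier_mat nr1 nc1" "B' \<in> carrier_mat nr1 nc2"
    "C' \<in> carrier_mat nr2 nc1" "D' \<in> carrier_mat nr2 nc2"
  shows "four_block_mat A B C D = four_block_mat A' B' C' D' \<longleftrightarrow> A = A' \<and> B = B' \<and> C = C' \<and> D = D'"
  using split_block_four_block_mat[OF assms(1-4)] split_block_four_block_mat[OF assms(5-8)]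
  by (metis prod.inject)

lemma upper_right_four_block_mat:
  assumes "A \<in> carrier_mat nr1 nc1" "B \<in> carrier_mat nr1 nc2" "D \<in> carrier_mat nr2 nc2"
  shows "mat nr1 nc2 (\<lambda>(i, j). four_block_mat A B C D $$ (i, j + nc1)) = B"
  using assms by (intro eq_matI) auto

lemma minus_mat_eq_0_iff:
  fixes A B :: "'a::group_add mat"
  assumes "A \<in> carrier_mat nr nc" "B \<in> carrier_mat nr nc"
  shows "A - B = 0\<^sub>m nr nc \<longleftrightarrow> A = B"
  using assms by (auto simp: mat_eq_iff)

lemma shear_mat_inverse:
  fixes G :: "'a::ring_1 mat"
  assumes "G \<in> carrier_mat n m"
  shows "four_block_mat (1\<^sub>m n) G (0\<^sub>m m n) (1\<^sub>m m) * four_block_mat (1\<^sub>m n) (- G) (0\<^sub>m m n) (1\<^sub>m m) = 1\<^sub>m (n + m)"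
    "four_block_mat (1\<^sub>m n) (- G) (0\<^sub>m m n) (1\<^sub>m m) * four_block_mat (1\<^sub>m n) G (0\<^sub>m m n) (1\<^sub>m m) = 1\<^sub>m (n + m)"
  using assms
  by (auto simp: mult_four_block_mat[of _ n n _ m _ m _ _ n _ m] mat_eq_iff)

lemma shear_conj_diag_four_block_mat:
  fixes G :: "'a::ring_1 mat"
  assumes "G \<in> carrier_mat n m" "A \<in> carrier_mat n n" "B \<in> carrier_mat m m"
  shows "four_block_mat (1\<^sub>m n) (- G) (0\<^sub>m m n) (1\<^sub>m m) * four_block_mat A (0\<^sub>m n m) (0\<^sub>m m n) B
      * four_block_mat (1\<^sub>m n) G (0\<^sub>m m n) (1\<^sub>m m)
    = four_block_mat A (A * G - G * B) (0\<^sub>m m n) B"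
  using assms by (auto simp: mult_four_block_mat[of _ n n _ m _ m _ _ n _ m] minus_add_uminus_mat)

definition upper_proj_mat :: "nat \<Rightarrow> 'a::{zero, one} mat" where
  "upper_proj_mat n = four_block_mat (1\<^sub>m n) (0\<^sub>m n n) (0\<^sub>m n n) (0\<^sub>m n n)"

definition lower_proj_mat :: "nat \<Rightarrow> 'a::{zero, one} mat" where
  "lower_proj_mat n = four_block_mat (0\<^sub>m n n) (0\<^sub>m n n) (0\<^sub>m n n) (1\<^sub>m n)"

lemma block_upper_triangular_iff_intertwines:
  fixes M P :: "'a::ring_1 mat"
  assumes M: "M \<in> carrier_mat (n + n) (n + n)" and P: "P \<in> carrier_mat n n"
  shows "M * upper_proj_mat n = upper_proj_mat n * four_block_mat P (0\<^sub>m n n) (0\<^sub>m n n) P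
      \<and> four_block_mat P (0\<^sub>m n n) (0\<^sub>m n n) P * lower_proj_mat n = lower_proj_mat n * M
    \<longleftrightarrow> (\<exists>Q \<in> carrier_mat n n. M = four_block_mat P Q (0\<^sub>m n n) P)"
proof -
  obtain A B C D where split: "split_block M n n = (A, B, C, D)" by (metis prod_cases4)
  note blocks = split_block[OF split, of n n]
  have c: "A \<in> carrier_mat n n" "B \<in> carrier_mat n n" "C \<in> carrier_mat n n" "D \<in> carrier_mat n n"
    and M_eq: "M = four_block_mat A B C D"
    using blocks M by auto
  have "M * upper_proj_mat n = four_block_mat A (0\<^sub>m n n) C (0\<^sub>m n n)"
    "upper_proj_mat n * four_block_mat P (0\<^sub>m n n) (0\<^sub>m n n) P = four_block_mat P (0\<^sub>m n n) (0\<^sub>m n n) (0\<^sub>m n n)"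
    "four_block_mat P (0\<^sub>m n n) (0\<^sub>m n n) P * lower_proj_mat n = four_block_mat (0\<^sub>m n n) (0\<^sub>m n n) (0\<^sub>m n n) P"
    "lower_proj_mat n * M = four_block_mat (0\<^sub>m n n) (0\<^sub>m n n) C D"
    unfolding M_eq upper_proj_mat_def lower_proj_mat_def using c P
    by (auto simp: mult_four_block_mat[of _ n n _ n _ n _ _ n _ n])
  then show ?thesis
    using c P by (auto simp: M_eq four_block_mat_inject[of _ n n _ n _ n])
qed

definition shift_mat :: "nat \<Rightarrow> 'a::{zero, one} mat" where
  "shift_mat n = four_block_mat (0\<^sub>m n n) (1\<^sub>m n) (0\<^sub>m n n) (0\<^sub>m n n)"

lemma commutator_shift_diag_four_block_mat:
  fixes A B :: "'a::ring_1 mat"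
  assumes A: "A \<in> carrier_mat n n" and B: "B \<in> carrier_mat n n"
  shows "four_block_mat A (0\<^sub>m n n) (0\<^sub>m n n) B * shift_mat n - shift_mat n * four_block_mat A (0\<^sub>m n n) (0\<^sub>m n n) B
    = 0\<^sub>m (n + n) (n + n) \<longleftrightarrow> A = B"
proof -
  have "four_block_mat A (0\<^sub>m n n) (0\<^sub>m n n) B * shift_mat n = four_block_mat (0\<^sub>m n n) A (0\<^sub>m n n) (0\<^sub>m n n)"
    "shift_mat n * four_block_mat A (0\<^sub>m n n) (0\<^sub>m n n) B = four_block_mat (0\<^sub>m n n) B (0\<^sub>m n n) (0\<^sub>m n n)"
    unfolding shift_mat_def using A B by (auto simp: mult_four_block_mat[of _ n n _ n _ n _ _ n _ n])
  then have "four_block_mat A (0\<^sub>m n n) (0\<^sub>m n n) B * shift_mat n - shift_mat n * four_block_mat A (0\<^sub>m n n) (0\<^sub>m n n) B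
      = four_block_mat (0\<^sub>m n n) (A - B) (0\<^sub>m n n) (0\<^sub>m n n)"
    using A B by (auto intro!: eq_matI)
  also have "\<dots> = 0\<^sub>m (n + n) (n + n) \<longleftrightarrow> A - B = 0\<^sub>m n n"
    using A B four_block_mat_inject[of "0\<^sub>m n n" n n "A - B" n "0\<^sub>m n n" n]
    by (simp add: minus_carrier_mat flip: four_block_zero_mat)
  finally show ?thesis
    using A B by (simp add: minus_mat_eq_0_iff)
qed

lemma mem_tuples_iff:
  "X \<in> tuples N \<longleftrightarrow> length (snd X) = N \<and> (\<forall>A \<in> set (snd X). A \<in> carrier_mat (fst X) (fst X))"
  by (cases X) (simp add: tuples_def)

lemma tsum_eq:
  "tsum X Y = (fst X + fst Y,
     map2 (\<lambda>A B. four_block_mat A (0\<^sub>m (fst X) (fst Y)) (0\<^sub>m (fst Y) (fst X)) B) (snd X) (snd Y))"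
  by (simp add: tsum_def split: prod.split)

lemma tblock_eq:
  "tblock X H = (fst X + fst X,
     map2 (\<lambda>A B. four_block_mat A B (0\<^sub>m (fst X) (fst X)) A) (snd X) (snd H))"
  by (simp add: tblock_def mult_2 split: prod.split)

definition tshear :: "'a::ring_1 mat \<Rightarrow> 'a tup \<Rightarrow> 'a tup \<Rightarrow> 'a tup" where
  "tshear G X Y = (fst X + fst Y,
     map2 (\<lambda>A B. four_block_mat A (A * G - G * B) (0\<^sub>m (fst Y) (fst X)) B) (snd X) (snd Y))"

lemma tconj_tsum_eq_tshear:
  fixes G :: "'a::ring_1 mat"
  assumes "X \<in> tuples k" "Y \<in> tuples k" "G \<in> carrier_mat (fst X) (fst Y)"
  shows "tconj (four_block_mat (1\<^sub>m (fst X)) (- G) (0\<^sub>m (fst Y) (fst X)) (1\<^sub>m (fst Y)))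
      (four_block_mat (1\<^sub>m (fst X)) G (0\<^sub>m (fst Y) (fst X)) (1\<^sub>m (fst Y))) (tsum X Y) = tshear G X Y"
  using assms shear_conj_diag_four_block_mat[OF assms(3)]
  by (auto simp: tconj_def tsum_eq tshear_def mem_tuples_iff list_eq_iff_nth_eq)

lemma free_set_tuples: "free_set N D \<Longrightarrow> X \<in> D \<Longrightarrow> X \<in> tuples N"
  unfolding free_set_def by blast

lemma free_set_tsum: "free_set N D \<Longrightarrow> X \<in> D \<Longrightarrow> Y \<in> D \<Longrightarrow> tsum X Y \<in> D"
  unfolding free_set_def by blast

lemma free_set_tconj:
  "free_set N D \<Longrightarrow> X \<in> D \<Longrightarrow> S \<in> carrier_mat (fst X) (fst X) \<Longrightarrow> T \<in> carrier_mat (fst X) (fst X)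
    \<Longrightarrow> S * T = 1\<^sub>m (fst X) \<Longrightarrow> T * S = 1\<^sub>m (fst X) \<Longrightarrow> tconj T S X \<in> D"
  unfolding free_set_def by blast

lemma free_map_free_set: "free_map N Nh D f \<Longrightarrow> free_set N D"
  unfolding free_map_def by blast

lemma free_map_tuples: "free_map N Nh D f \<Longrightarrow> X \<in> D \<Longrightarrow> f X \<in> tuples Nh"
  unfolding free_map_def by blast

lemma free_map_fst: "free_map N Nh D f \<Longrightarrow> X \<in> D \<Longrightarrow> fst (f X) = fst X"
  unfolding free_map_def by blast

lemma free_map_tsum: "free_map N Nh D f \<Longrightarrow> X \<in> D \<Longrightarrow> Y \<in> D \<Longrightarrow> f (tsum X Y) = tsum (f X) (f Y)"
  unfolding free_map_def by blast

lemma free_map_tconj: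
  "free_map N Nh D f \<Longrightarrow> X \<in> D \<Longrightarrow> S \<in> carrier_mat (fst X) (fst X) \<Longrightarrow> T \<in> carrier_mat (fst X) (fst X)
    \<Longrightarrow> S * T = 1\<^sub>m (fst X) \<Longrightarrow> T * S = 1\<^sub>m (fst X) \<Longrightarrow> f (tconj T S X) = tconj T S (f X)"
  unfolding free_map_def by blast

lemma free_map_tshear:
  fixes f :: "'a::ring_1 tup \<Rightarrow> 'a tup"
  assumes f: "free_map N Nh D f" and X: "X \<in> D" and Y: "Y \<in> D" and G: "G \<in> carrier_mat (fst X) (fst Y)"
  shows "tshear G X Y \<in> D" "f (tshear G X Y) = tshear G (f X) (f Y)"
proof -
  let ?S = "four_block_mat (1\<^sub>m (fst X)) G (0\<^sub>m (fst Y) (fst X)) (1\<^sub>m (fst Y))"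
  let ?T = "four_block_mat (1\<^sub>m (fst X)) (- G) (0\<^sub>m (fst Y) (fst X)) (1\<^sub>m (fst Y))"
  have D: "free_set N D" using f by (rule free_map_free_set)
  have XY: "tsum X Y \<in> D" using D X Y by (rule free_set_tsum)
  have ST: "?S \<in> carrier_mat (fst (tsum X Y)) (fst (tsum X Y))" "?T \<in> carrier_mat (fst (tsum X Y)) (fst (tsum X Y))"
    "?S * ?T = 1\<^sub>m (fst (tsum X Y))" "?T * ?S = 1\<^sub>m (fst (tsum X Y))"
    using G shear_mat_inverse[OF G] by (auto simp: tsum_eq)
  have wf: "X \<in> tuples N" "Y \<in> tuples N" "f X \<in> tuples Nh" "f Y \<in> tuples Nh"
    using D f X Y by (auto intro: free_set_tuples free_map_tuples)
  have fG: "G \<in> carrier_mat (fst (f X)) (fst (f Y))"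
    using G f X Y by (simp add: free_map_fst)
  show "tshear G X Y \<in> D"
    using free_set_tconj[OF D XY ST] tconj_tsum_eq_tshear[OF wf(1,2) G] by simp
  have "f (tshear G X Y) = tconj ?T ?S (tsum (f X) (f Y))"
    using free_map_tconj[OF f XY ST] tconj_tsum_eq_tshear[OF wf(1,2) G] free_map_tsum[OF f X Y]
    by simp
  also have "\<dots> = tshear G (f X) (f Y)"
    using tconj_tsum_eq_tshear[OF wf(3,4) fG] f X Y by (simp add: free_map_fst)
  finally show "f (tshear G X Y) = tshear G (f X) (f Y)" .
qed

definition intertwines :: "'a::semiring_1 mat \<Rightarrow> 'a tup \<Rightarrow> 'a tup \<Rightarrow> bool" where
  "intertwines G X Y \<longleftrightarrow> list_all2 (\<lambda>A B. A * G = G * B) (snd X) (snd Y)"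

lemma tshear_eq_tsum_iff:
  fixes G :: "'a::ring_1 mat"
  assumes X: "X \<in> tuples k" and Y: "Y \<in> tuples k" and G: "G \<in> carrier_mat (fst X) (fst Y)"
  shows "tshear G X Y = tsum X Y \<longleftrightarrow> intertwines G X Y"
proof -
  have block_eq_iff: "four_block_mat A (A * G - G * B) (0\<^sub>m (fst Y) (fst X)) B
      = four_block_mat A (0\<^sub>m (fst X) (fst Y)) (0\<^sub>m (fst Y) (fst X)) B \<longleftrightarrow> A * G = G * B"
    if "A \<in> carrier_mat (fst X) (fst X)" "B \<in> carrier_mat (fst Y) (fst Y)" for A B
  proof -
    have AG: "A * G \<in> carrier_mat (fst X) (fst Y)" and GB: "G * B \<in> carrier_mat (fst X) (fst Y)"
      using that G by auto
    show ?thesis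
      using four_block_mat_inject[OF that(1) minus_carrier_mat[OF GB] zero_carrier_mat that(2)
          that(1) zero_carrier_mat zero_carrier_mat that(2)] minus_mat_eq_0_iff[OF AG GB]
      by simp
  qed
  show ?thesis
    using X Y block_eq_iff
    by (auto simp: tshear_def tsum_eq intertwines_def mem_tuples_iff list_eq_iff_nth_eq list_all2_conv_all_nth)
qed

lemma free_map_intertwines:
  fixes f :: "'a::ring_1 tup \<Rightarrow> 'a tup"
  assumes f: "free_map N Nh D f" and X: "X \<in> D" and Y: "Y \<in> D"
    and G: "G \<in> carrier_mat (fst X) (fst Y)" and XY: "intertwines G X Y"
  shows "intertwines G (f X) (f Y)"
proof -
  have D: "free_set N D" using f by (rule free_map_free_set)
  have "tsum (f X) (f Y) = f (tsum X Y)"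
    using free_map_tsum[OF f X Y] by simp
  also have "tsum X Y = tshear G X Y"
    using tshear_eq_tsum_iff[OF free_set_tuples[OF D X] free_set_tuples[OF D Y] G] XY by simp
  also have "f (tshear G X Y) = tshear G (f X) (f Y)"
    using free_map_tshear[OF f X Y G] by simp
  finally have "tshear G (f X) (f Y) = tsum (f X) (f Y)" by (rule sym)
  moreover have "G \<in> carrier_mat (fst (f X)) (fst (f Y))"
    using G f X Y by (simp add: free_map_fst)
  ultimately show ?thesis
    using tshear_eq_tsum_iff[OF free_map_tuples[OF f X] free_map_tuples[OF f Y]] by blast
qed

definition tcommutator :: "'a::ring_1 mat \<Rightarrow> 'a tup \<Rightarrow> 'a tup" where
  "tcommutator G X = (fst X, map (\<lambda>A. A * G - G * A) (snd X))"

lemma tcommutator_tuples: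
  "X \<in> tuples k \<Longrightarrow> G \<in> carrier_mat (fst X) (fst X) \<Longrightarrow> tcommutator G X \<in> tuples k"
  by (auto simp: tcommutator_def mem_tuples_iff intro!: minus_carrier_mat)

lemma tblock_tcommutator: "tblock X (tcommutator G X) = tshear G X X"
  by (simp add: tblock_eq tshear_def tcommutator_def list_eq_iff_nth_eq)

lemma Dfree_eqI:
  assumes fZ: "f (tblock X H) = tblock P K" and P: "P \<in> tuples k" and K: "K \<in> tuples k"
    and "fst P = fst X" "fst K = fst X"
  shows "Dfree f X H = K"
proof -
  let ?n = "fst X"
  have blocks: "snd (f (tblock X H)) ! j = four_block_mat (snd P ! j) (snd K ! j) (0\<^sub>m ?n ?n) (snd P ! j)"
    and carriers: "snd P ! j \<in> carrier_mat ?n ?n" "snd K ! j \<in> carrier_mat ?n ?n" if "j < k" for j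
    using that P K assms(4,5) unfolding fZ by (auto simp: tblock_eq mem_tuples_iff)
  have "map (\<lambda>B. mat ?n ?n (\<lambda>(i, j). B $$ (i, j + ?n))) (snd (f (tblock X H))) = snd K"
  proof (rule nth_equalityI)
    show "length (map (\<lambda>B. mat ?n ?n (\<lambda>(i, j). B $$ (i, j + ?n))) (snd (f (tblock X H)))) = length (snd K)"
      using P K unfolding fZ by (simp add: tblock_eq mem_tuples_iff)
    then show "map (\<lambda>B. mat ?n ?n (\<lambda>(i, j). B $$ (i, j + ?n))) (snd (f (tblock X H))) ! j = snd K ! j"
      if "j < length (map (\<lambda>B. mat ?n ?n (\<lambda>(i, j). B $$ (i, j + ?n))) (snd (f (tblock X H))))" for j
      using that K blocks upper_right_four_block_mat[OF carriers(1,2,1)] by (simp add: mem_tuples_iff)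
  qed
  then show ?thesis
    using assms(5) by (simp add: Dfree_def prod_eq_iff)
qed

lemma Dfree_tcommutator:
  fixes f :: "'a::ring_1 tup \<Rightarrow> 'a tup"
  assumes f: "free_map N Nh D f" and X: "X \<in> D" and G: "G \<in> carrier_mat (fst X) (fst X)"
  shows "tblock X (tcommutator G X) \<in> D" "Dfree f X (tcommutator G X) = tcommutator G (f X)"
proof -
  have fX: "f X \<in> tuples Nh" "fst (f X) = fst X"
    using f X by (auto intro: free_map_tuples free_map_fst)
  show "tblock X (tcommutator G X) \<in> D"
    using free_map_tshear(1)[OF f X X G] by (simp add: tblock_tcommutator)
  have "f (tblock X (tcommutator G X)) = tblock (f X) (tcommutator G (f X))"
    using free_map_tshear(2)[OF f X X G] by (simp add: tblock_tcommutator)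
  then show "Dfree f X (tcommutator G X) = tcommutator G (f X)"
    by (rule Dfree_eqI[where k = Nh]) (use fX G tcommutator_tuples[OF fX(1)] in \<open>auto simp: tcommutator_def\<close>)
qed

lemma tblock_intertwines_tsum:
  fixes X H :: "'a::ring_1 tup"
  assumes X: "X \<in> tuples k" and H: "H \<in> tuples k" "fst H = fst X"
  shows "intertwines (upper_proj_mat (fst X)) (tblock X H) (tsum X X)"
    "intertwines (lower_proj_mat (fst X)) (tsum X X) (tblock X H)"
proof -
  have "four_block_mat A B (0\<^sub>m (fst X) (fst X)) A * upper_proj_mat (fst X)
      = upper_proj_mat (fst X) * four_block_mat A (0\<^sub>m (fst X) (fst X)) (0\<^sub>m (fst X) (fst X)) A
    \<and> four_block_mat A (0\<^sub>m (fst X) (fst X)) (0\<^sub>m (fst X) (fst X)) A * lower_proj_mat (fst X)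
      = lower_proj_mat (fst X) * four_block_mat A B (0\<^sub>m (fst X) (fst X)) A"
    if "A \<in> carrier_mat (fst X) (fst X)" "B \<in> carrier_mat (fst X) (fst X)" for A B :: "'a mat"
    using block_upper_triangular_iff_intertwines[of "four_block_mat A B (0\<^sub>m (fst X) (fst X)) A"] that
    by auto
  then show "intertwines (upper_proj_mat (fst X)) (tblock X H) (tsum X X)"
    "intertwines (lower_proj_mat (fst X)) (tsum X X) (tblock X H)"
    using X H by (auto simp: intertwines_def tblock_eq tsum_eq mem_tuples_iff list_all2_conv_all_nth)
qed

lemma free_map_tblock:
  fixes f :: "'a::ring_1 tup \<Rightarrow> 'a tup"
  assumes f: "free_map N Nh D f" and X: "X \<in> D" and H: "H \<in> tuples N" "fst H = fst X"
    and XH: "tblock X H \<in> D"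
  shows "f (tblock X H) = tblock (f X) (Dfree f X H)"
proof -
  let ?n = "fst X"
  let ?diag = "\<lambda>A. four_block_mat A (0\<^sub>m ?n ?n) (0\<^sub>m ?n ?n) A"
  have D: "free_set N D" using f by (rule free_map_free_set)
  have XX: "tsum X X \<in> D" using D X X by (rule free_set_tsum)
  have E: "upper_proj_mat ?n \<in> carrier_mat (fst (tblock X H)) (fst (tsum X X))"
    "lower_proj_mat ?n \<in> carrier_mat (fst (tsum X X)) (fst (tblock X H))"
    by (simp_all add: upper_proj_mat_def lower_proj_mat_def tblock_eq tsum_eq)
  note intertwines = tblock_intertwines_tsum[OF free_set_tuples[OF D X] H]
  obtain Ps where fX: "f X = (?n, Ps)"
    using free_map_fst[OF f X] by (metis prod.collapse)
  obtain Zs where fZ: "f (tblock X H) = (?n + ?n, Zs)"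
  proof -
    have "fst (f (tblock X H)) = ?n + ?n"
      using free_map_fst[OF f XH] by (simp add: tblock_eq)
    then show ?thesis using that by (metis prod.collapse)
  qed
  have Ps: "length Ps = Nh" "j < Nh \<Longrightarrow> Ps ! j \<in> carrier_mat ?n ?n" for j
    using free_map_tuples[OF f X] fX by (auto simp: mem_tuples_iff)
  have Zs: "length Zs = Nh" "j < Nh \<Longrightarrow> Zs ! j \<in> carrier_mat (?n + ?n) (?n + ?n)" for j
    using free_map_tuples[OF f XH] fZ by (auto simp: mem_tuples_iff)
  have "intertwines (upper_proj_mat ?n) (f (tblock X H)) (tsum (f X) (f X))"
    "intertwines (lower_proj_mat ?n) (tsum (f X) (f X)) (f (tblock X H))"
    using free_map_intertwines[OF f XH XX E(1) intertwines(1)]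
      free_map_intertwines[OF f XX XH E(2) intertwines(2)] free_map_tsum[OF f X X] by simp_all
  then have intertwined: "Zs ! j * upper_proj_mat ?n = upper_proj_mat ?n * ?diag (Ps ! j)
      \<and> ?diag (Ps ! j) * lower_proj_mat ?n = lower_proj_mat ?n * Zs ! j" if "j < Nh" for j
    using that Ps(1) unfolding fX fZ by (auto simp: intertwines_def tsum_eq list_all2_conv_all_nth)
  have "Zs ! j = four_block_mat (Ps ! j) (mat ?n ?n (\<lambda>(i, k). Zs ! j $$ (i, k + ?n))) (0\<^sub>m ?n ?n) (Ps ! j)"
    if j: "j < Nh" for j
  proof -
    obtain Q where Q: "Q \<in> carrier_mat ?n ?n" "Zs ! j = four_block_mat (Ps ! j) Q (0\<^sub>m ?n ?n) (Ps ! j)"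
      using block_upper_triangular_iff_intertwines[OF Zs(2)[OF j] Ps(2)[OF j]] intertwined[OF j] by blast
    show ?thesis
      using upper_right_four_block_mat[OF Ps(2)[OF j] Q(1) Ps(2)[OF j]] Q(2) by simp
  qed
  then show ?thesis
    using Ps Zs unfolding Dfree_def Let_def fZ fX by (simp add: tblock_eq list_eq_iff_nth_eq)
qed

lemma tblock_tzero: "X \<in> tuples k \<Longrightarrow> tblock X (tzero k (fst X)) = tsum X X"
  by (auto simp: tblock_eq tsum_eq tzero_def mem_tuples_iff list_eq_iff_nth_eq)

lemma tblock_eq_tblock_iff:
  assumes X: "X \<in> tuples k" and H: "H \<in> tuples k" "fst H = fst X" and H': "H' \<in> tuples k" "fst H' = fst X"
  shows "tblock X H = tblock X H' \<longleftrightarrow> H = H'"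
proof
  assume eq: "tblock X H = tblock X H'"
  have "snd H ! j = snd H' ! j" if j: "j < k" for j
  proof -
    have c: "snd X ! j \<in> carrier_mat (fst X) (fst X)" "snd H ! j \<in> carrier_mat (fst X) (fst X)"
      "snd H' ! j \<in> carrier_mat (fst X) (fst X)"
      using X H H' j by (auto simp: mem_tuples_iff)
    have "snd (tblock X H) ! j = snd (tblock X H') ! j" by (simp only: eq)
    then have "four_block_mat (snd X ! j) (snd H ! j) (0\<^sub>m (fst X) (fst X)) (snd X ! j)
        = four_block_mat (snd X ! j) (snd H' ! j) (0\<^sub>m (fst X) (fst X)) (snd X ! j)"
      using X H H' j by (simp add: tblock_eq mem_tuples_iff)
    then show ?thesis
      using four_block_mat_inject[OF c(1,2) zero_carrier_mat c(1) c(1,3) zero_carrier_mat c(1)] by simp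
  qed
  then show "H = H'"
    using H H' by (simp add: prod_eq_iff list_eq_iff_nth_eq mem_tuples_iff)
qed simp

lemma tcommutator_shift_tsum_eq_tzero_iff:
  fixes X Y :: "'a::ring_1 tup"
  assumes X: "X \<in> tuples k" and Y: "Y \<in> tuples k" and XY: "fst Y = fst X"
  shows "tcommutator (shift_mat (fst X)) (tsum X Y) = tzero k (fst X + fst X) \<longleftrightarrow> X = Y"
proof -
  let ?n = "fst X"
  let ?diag = "\<lambda>j. four_block_mat (snd X ! j) (0\<^sub>m ?n ?n) (0\<^sub>m ?n ?n) (snd Y ! j)"
  have c: "snd X ! j \<in> carrier_mat ?n ?n" "snd Y ! j \<in> carrier_mat ?n ?n" if "j < k" for j
    using X Y XY that by (auto simp: mem_tuples_iff)
  have "tcommutator (shift_mat ?n) (tsum X Y) = tzero k (?n + ?n) \<longleftrightarrow>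
      (\<forall>j < k. ?diag j * shift_mat ?n - shift_mat ?n * ?diag j = 0\<^sub>m (?n + ?n) (?n + ?n))"
    using X Y XY by (auto simp: tcommutator_def tsum_eq tzero_def mem_tuples_iff list_eq_iff_nth_eq)
  also have "\<dots> \<longleftrightarrow> (\<forall>j < k. snd X ! j = snd Y ! j)"
    using commutator_shift_diag_four_block_mat[OF c] by simp
  also have "\<dots> \<longleftrightarrow> X = Y"
    using X Y XY by (auto simp: prod_eq_iff list_eq_iff_nth_eq mem_tuples_iff)
  finally show ?thesis .
qed

lemma nonsingular_Dfree_imp_inj_on:
  fixes f :: "'a::ring_1 tup \<Rightarrow> 'a tup"
  assumes f: "free_map N Nh D f"
    and nonsingular: "\<forall>X \<in> D. \<forall>H \<in> tuples N. fst H = fst X \<longrightarrow> tblock X H \<in> D \<longrightarrow>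
      Dfree f X H = tzero Nh (fst X) \<longrightarrow> H = tzero N (fst X)"
  shows "inj_on f D"
proof (rule inj_onI)
  fix X Y assume X: "X \<in> D" and Y: "Y \<in> D" and fXY: "f X = f Y"
  let ?n = "fst X"
  let ?E = "shift_mat ?n :: 'a mat"
  have D: "free_set N D" using f by (rule free_map_free_set)
  have XY: "fst Y = fst X"
    using free_map_fst[OF f X] free_map_fst[OF f Y] fXY by simp
  have A: "tsum X Y \<in> D" and fst_A: "fst (tsum X Y) = ?n + ?n"
    using free_set_tsum[OF D X Y] XY by (simp_all add: tsum_eq)
  have E: "?E \<in> carrier_mat (fst (tsum X Y)) (fst (tsum X Y))"
    using fst_A by (simp add: shift_mat_def)
  have "Dfree f (tsum X Y) (tcommutator ?E (tsum X Y)) = tcommutator ?E (tsum (f X) (f X))"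
    using Dfree_tcommutator(2)[OF f A E] free_map_tsum[OF f X Y] fXY by simp
  also have "\<dots> = tzero Nh (?n + ?n)"
    using tcommutator_shift_tsum_eq_tzero_iff[OF free_map_tuples[OF f X] free_map_tuples[OF f X]]
      free_map_fst[OF f X] by simp
  finally have singular: "Dfree f (tsum X Y) (tcommutator ?E (tsum X Y)) = tzero Nh (fst (tsum X Y))"
    using fst_A by simp
  have "tcommutator ?E (tsum X Y) = tzero N (fst (tsum X Y))"
    by (rule nonsingular[rule_format, OF A tcommutator_tuples[OF free_set_tuples[OF D A] E] _
          Dfree_tcommutator(1)[OF f A E] singular])
       (simp add: tcommutator_def)
  then show "X = Y"
    using tcommutator_shift_tsum_eq_tzero_iff[OF free_set_tuples[OF D X] free_set_tuples[OF D Y] XY] fst_A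
    by simp
qed

lemma inj_on_imp_nonsingular_Dfree:
  fixes f :: "'a::ring_1 tup \<Rightarrow> 'a tup"
  assumes f: "free_map N Nh D f" and inj: "inj_on f D" and X: "X \<in> D"
    and H: "H \<in> tuples N" "fst H = fst X" and XH: "tblock X H \<in> D"
    and singular: "Dfree f X H = tzero Nh (fst X)"
  shows "H = tzero N (fst X)"
proof -
  have D: "free_set N D" using f by (rule free_map_free_set)
  have "f (tblock X H) = tblock (f X) (tzero Nh (fst (f X)))"
    using free_map_tblock[OF f X H XH] singular free_map_fst[OF f X] by simp
  also have "\<dots> = f (tsum X X)"
    using tblock_tzero[OF free_map_tuples[OF f X]] free_map_tsum[OF f X X] by simp
  finally have "tblock X H = tblock X (tzero N (fst X))"
    using inj_onD[OF inj _ XH free_set_tsum[OF D X X]] tblock_tzero[OF free_set_tuples[OF D X]] by simp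
  then show ?thesis
    using tblock_eq_tblock_iff[OF free_set_tuples[OF D X] H] by (simp add: tzero_def mem_tuples_iff)
qed

lemma free_map_the_inv_into:
  fixes f :: "'a::semiring_1 tup \<Rightarrow> 'a tup"
  assumes f: "free_map N Nh D f" and inj: "inj_on f D"
  shows "free_map Nh N (f ` D) (the_inv_into D f)"
proof -
  let ?g = "the_inv_into D f"
  have D: "free_set N D" using f by (rule free_map_free_set)
  have g: "?g (f X) = X" if "X \<in> D" for X
    using the_inv_into_f_f[OF inj that] .
  have tconj_image: "\<exists>X \<in> D. X' = f X \<and> tconj T S X \<in> D \<and> tconj T S X' = f (tconj T S X)"
    if X': "X' \<in> f ` D" and ST: "S \<in> carrier_mat (fst X') (fst X') \<and> T \<in> carrier_mat (fst X') (fst X')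
      \<and> S * T = 1\<^sub>m (fst X') \<and> T * S = 1\<^sub>m (fst X')" for X' and S T :: "'a mat"
  proof -
    obtain X where X: "X \<in> D" and X'_eq: "X' = f X" using X' by blast
    then show ?thesis
      using ST free_set_tconj[OF D X] free_map_tconj[OF f X] free_map_fst[OF f X] by auto
  qed
  have fD: "free_set Nh (f ` D)"
    unfolding free_set_def
  proof (intro conjI ballI allI impI)
    show "f ` D \<subseteq> tuples Nh"
      using free_map_tuples[OF f] by blast
  next
    fix X' Y' assume "X' \<in> f ` D" "Y' \<in> f ` D"
    then obtain X Y where X: "X \<in> D" and Y: "Y \<in> D" and "X' = f X" "Y' = f Y" by blast
    then show "tsum X' Y' \<in> f ` D"
      using imageI[OF free_set_tsum[OF D X Y], of f] free_map_tsum[OF f X Y] by simp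
  next
    fix X' and S T :: "'a mat"
    assume "X' \<in> f ` D" and "S \<in> carrier_mat (fst X') (fst X') \<and> T \<in> carrier_mat (fst X') (fst X')
      \<and> S * T = 1\<^sub>m (fst X') \<and> T * S = 1\<^sub>m (fst X')"
    then show "tconj T S X' \<in> f ` D"
      using tconj_image by blast
  qed
  show ?thesis
    unfolding free_map_def
  proof (intro conjI ballI allI impI fD)
    fix X' assume "X' \<in> f ` D"
    then show "?g X' \<in> tuples N" "fst (?g X') = fst X'"
      using g free_set_tuples[OF D] free_map_fst[OF f] by auto
  next
    fix X' Y' assume "X' \<in> f ` D" "Y' \<in> f ` D"
    then obtain X Y where X: "X \<in> D" and Y: "Y \<in> D" and "X' = f X" "Y' = f Y" by blast
    then show "?g (tsum X' Y') = tsum (?g X') (?g Y')"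
      using g[OF free_set_tsum[OF D X Y]] free_map_tsum[OF f X Y] g[OF X] g[OF Y] by simp
  next
    fix X' and S T :: "'a mat"
    assume "X' \<in> f ` D" and "S \<in> carrier_mat (fst X') (fst X') \<and> T \<in> carrier_mat (fst X') (fst X')
      \<and> S * T = 1\<^sub>m (fst X') \<and> T * S = 1\<^sub>m (fst X')"
    then obtain X where "X \<in> D" "X' = f X" "tconj T S X \<in> D" "tconj T S X' = f (tconj T S X)"
      using tconj_image by blast
    then show "?g (tconj T S X') = tconj T S (?g X')"
      using g by simp
  qed
qed

theorem mainTheorem1:
  fixes D :: "'a::ring_1 tup set" and f :: "'a tup \<Rightarrow> 'a tup" and N Nh :: nat
  assumes "free_set N D" and "free_map N Nh D f"
  shows "((\<forall>X \<in> D. \<forall>H \<in> tuples N. fst H = fst X \<longrightarrow> tblock X H \<in> D \<longrightarrow>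
              Dfree f X H = tzero Nh (fst X) \<longrightarrow> H = tzero N (fst X))
          \<longleftrightarrow> inj_on f D)
       \<and> (inj_on f D \<longleftrightarrow> (inj_on f D \<and> free_map Nh N (f ` D) (the_inv_into D f)))"
  \<comment> \<open>\<open>free_set N D\<close> is already part of \<open>free_map N Nh D f\<close>.\<close>
  using nonsingular_Dfree_imp_inj_on[OF assms(2)] inj_on_imp_nonsingular_Dfree[OF assms(2)]
    free_map_the_inv_into[OF assms(2)] by blast

end
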